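(* There is an absolute constant $C>0$ such that the following holds. Let $n,d$ be positive integers and let $E$ be a nonempty family of subsets of $[n]=\{1,\dots,n\}$, each of size at most $d$. For every positive integer $p\le d-1$ there exists a non-adaptive group testing algorithm for $E$ consisting of $t\le C\,\frac{d}{p}\log|E|$ tests, i.e. pools $T_1,\dots,T_t\subseteq[n]$, which allows to discard all hyperedges $e\in E$ with $|e\setminus e^*|\ge p$, where $e^*$ is the defective hyperedge: for every $e^*\in E$ and every $e\in E$ with $|e\setminus e^*|\ge p$ one has $r(e)\neq r(e^* )$.
   Context: Group testing on a hypergraph: the set of items is $[n]$, and $E$ is a family of subsets of $[n]$ (hyperedges), exactly one of which, $e^*\in E$, is the unknown defective hyperedge. A test on a pool $T\subseteq[n]$ gives a positive response iff $T\cap e^*\neq\emptyset$. A non-adaptive algorithm with $t$ tests is a sequence of pools $T_1,\dots,T_t\subseteq[n]$ fixed in advance (all tested in parallel); for $f\in E$ its response vector is $r(f)=(r_1,\dots,r_t)\in\{0,1\}^t$ with $r_i=1$ iff $T_i\cap f\neq\emptyset$. A hyperedge $e$ can be discarded when $e^*$ is defective if the observed responses are inconsistent with $e$ being defective, i.e. $r(e)\neq r(e^* )$. Logarithms are to a fixed base (e.g. base 2). *)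

theory Defs
  imports Complex_Main
begin

definition response :: "nat set list \<Rightarrow> nat set \<Rightarrow> bool list" where
  "response Ts f = map (\<lambda>T. T \<inter> f \<noteq> {}) Ts"

end

theory Submission
  imports Defs "HOL-Library.FuncSet"
begin

(*
  A random pool containing each item independently with probability 1/d separates a pair
  (estar, e) with |e - estar| >= p, i.e. misses estar and meets e - estar, with probability
  (1 - 1/d)^|estar| * (1 - (1 - 1/d)^|e - estar|) >= p / (18 d).  By averaging, some pool
  separates a p / (18 d) fraction of any finite set of such pairs, so t greedily chosen pools
  leave at most (1 - p / (18 d))^t * |E|^2 < 1 pairs unseparated once t is of order
  (d / p) log |E|.  A random pool is modelled as the level set h^-1(1) of a function
  h : [n] -> [d], so probabilities become cardinalities of sets of such functions.
*)

definition separates :: "'a set \<Rightarrow> 'a set \<Rightarrow> 'a set \<Rightarrow> bool" where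
  "separates T estar e \<longleftrightarrow> T \<inter> estar = {} \<and> T \<inter> e \<noteq> {}"

lemma response_neq_if_separates:
  assumes "T \<in> set Ts" "separates T estar e"
  shows "response Ts e \<noteq> response Ts estar"
  using assms by (auto simp: response_def separates_def map_eq_conv)

lemma card_PiE_avoiding:
  assumes "finite I" "finite V" "S \<subseteq> I"
  shows "card {h \<in> I \<rightarrow>\<^sub>E V. \<forall>x\<in>S. h x \<noteq> v}
    = card (V - {v}) ^ card S * card V ^ (card I - card S)"
proof -
  have "{h \<in> I \<rightarrow>\<^sub>E V. \<forall>x\<in>S. h x \<noteq> v} = (\<Pi>\<^sub>E x\<in>I. if x \<in> S then V - {v} else V)"
    using assms(3) by (auto simp: PiE_iff extensional_def split: if_splits)
  then have "card {h \<in> I \<rightarrow>\<^sub>E V. \<forall>x\<in>S. h x \<noteq> v}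
      = (\<Prod>x\<in>I. if x \<in> S then card (V - {v}) else card V)"
    using assms(1) by (simp add: card_PiE if_distrib)
  also have "\<dots> = card (V - {v}) ^ card S * card V ^ (card I - card S)"
  proof -
    have "I \<inter> {x. x \<in> S} = S" "I \<inter> - {x. x \<in> S} = I - S" using assms(3) by auto
    then show ?thesis using assms by (simp add: prod.If_cases card_Diff_subset finite_subset)
  qed
  finally show ?thesis .
qed

lemma card_PiE_avoiding_hitting:
  assumes "finite I" "finite V" "v \<in> V" "A \<subseteq> I" "B \<subseteq> I" "A \<inter> B = {}"
  shows "real (card {h \<in> I \<rightarrow>\<^sub>E V. (\<forall>x\<in>A. h x \<noteq> v) \<and> (\<exists>x\<in>B. h x = v)})
    = real (card V) ^ card I * (1 - 1 / card V) ^ card A * (1 - (1 - 1 / card V) ^ card B)"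
proof -
  define avoiding where "avoiding S = {h \<in> I \<rightarrow>\<^sub>E V. \<forall>x\<in>S. h x \<noteq> v}" for S
  define r where "r = 1 - 1 / real (card V)"
  have V: "card V > 0" using assms(2,3) card_gt_0_iff by blast
  have card_avoiding: "real (card (avoiding S)) = real (card V) ^ card I * r ^ card S"
    if "S \<subseteq> I" for S
  proof -
    have "card S \<le> card I" using that assms(1) by (rule card_mono[rotated])
    moreover have "real (card (V - {v})) = real (card V) * r"
      using assms(2,3) V by (auto simp: r_def card_Diff_singleton of_nat_diff field_simps)
    ultimately show ?thesis
      using that assms(1,2)
      by (simp add: avoiding_def card_PiE_avoiding power_mult_distrib power_add[symmetric])
  qed
  have "{h \<in> I \<rightarrow>\<^sub>E V. (\<forall>x\<in>A. h x \<noteq> v) \<and> (\<exists>x\<in>B. h x = v)}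
      = avoiding A - avoiding (A \<union> B)"
    by (auto simp: avoiding_def)
  moreover have "card (avoiding A - avoiding (A \<union> B))
      = card (avoiding A) - card (avoiding (A \<union> B))"
    using assms(1,2) by (intro card_Diff_subset) (auto simp: avoiding_def finite_PiE)
  moreover have "card (avoiding (A \<union> B)) \<le> card (avoiding A)"
    using assms(1,2) by (intro card_mono) (auto simp: avoiding_def finite_PiE)
  moreover have "card (A \<union> B) = card A + card B"
    using assms by (meson card_Un_disjoint finite_subset)
  ultimately show ?thesis
    using assms(4,5) card_avoiding[of A] card_avoiding[of "A \<union> B"]
    by (simp add: of_nat_diff r_def power_add algebra_simps)
qed

lemma power_one_minus_inverse_ge:
  assumes "d \<ge> 2"
  shows "1 / 9 \<le> (1 - 1 / real d) ^ d"
proof -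
  have "- (1 / real d) - 2 * (1 / real d)\<^sup>2 \<le> ln (1 - 1 / real d)"
    using assms by (intro ln_one_minus_pos_lower_bound) auto
  then have "real d * (- (1 / real d) - 2 * (1 / real d)\<^sup>2) \<le> real d * ln (1 - 1 / real d)"
    by (intro mult_left_mono) auto
  moreover have "-2 \<le> real d * (- (1 / real d) - 2 * (1 / real d)\<^sup>2)"
    using assms by (simp add: power2_eq_square field_simps)
  ultimately have ln_ge: "-2 \<le> real d * ln (1 - 1 / real d)"
    by linarith
  have "exp 2 \<le> (9::real)"
    using power_mono[OF exp_le, of 2] by (simp add: exp_of_nat_mult[symmetric])
  then have "1 / 9 \<le> 1 / exp (2::real)"
    by (intro divide_left_mono) auto
  also have "\<dots> = exp (-2)"
    by (simp add: exp_minus inverse_eq_divide)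
  also have "\<dots> \<le> exp (real d * ln (1 - 1 / real d))"
    using ln_ge by simp
  also have "\<dots> = (1 - 1 / real d) ^ d"
    using assms by (simp add: exp_of_nat_mult)
  finally show ?thesis .
qed

lemma one_minus_power_one_minus_inverse_ge:
  assumes "p \<le> b" "p \<le> d" "d > 0"
  shows "real p / (2 * real d) \<le> 1 - (1 - 1 / real d) ^ b"
proof -
  define y where "y = real p / real d"
  have "0 \<le> y" "y \<le> 1" using assms by (auto simp: y_def)
  have "(1 - 1 / real d) ^ b \<le> (1 - 1 / real d) ^ p"
    using assms by (intro power_decreasing) auto
  also have "\<dots> \<le> exp (- (1 / real d)) ^ p"
    using assms(3) exp_ge_add_one_self[of "- (1 / real d)"] by (intro power_mono) auto
  also have "\<dots> = 1 / exp y"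
    by (simp add: y_def exp_of_nat_mult[symmetric] exp_minus field_simps)
  also have "\<dots> \<le> 1 / (1 + y)"
    using exp_ge_add_one_self[of y] \<open>0 \<le> y\<close>
    by (intro divide_left_mono) (auto intro!: mult_pos_pos add_pos_nonneg)
  finally have "(1 - 1 / real d) ^ b \<le> 1 / (1 + y)" .
  moreover have "1 - 1 / (1 + y) = y / (1 + y)"
    using \<open>0 \<le> y\<close> by (simp add: field_simps)
  moreover have "y / 2 \<le> y / (1 + y)"
    using \<open>0 \<le> y\<close> \<open>y \<le> 1\<close> by (intro divide_left_mono) auto
  ultimately have "y / 2 \<le> 1 - (1 - 1 / real d) ^ b"
    by linarith
  then show ?thesis by (simp add: y_def)
qed

lemma separation_probability_ge:
  assumes "d \<ge> 2" "a \<le> d" "p \<le> b" "p \<le> d"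
  shows "real p / (18 * real d) \<le> (1 - 1 / real d) ^ a * (1 - (1 - 1 / real d) ^ b)"
proof -
  have "(1 - 1 / real d) ^ d \<le> (1 - 1 / real d) ^ a"
    using assms by (intro power_decreasing) auto
  then have "1 / 9 \<le> (1 - 1 / real d) ^ a"
    using power_one_minus_inverse_ge[OF assms(1)] by linarith
  moreover have "real p / (2 * real d) \<le> 1 - (1 - 1 / real d) ^ b"
    using assms by (intro one_minus_power_one_minus_inverse_ge) auto
  ultimately have "1 / 9 * (real p / (2 * real d)) \<le> (1 - 1 / real d) ^ a * (1 - (1 - 1 / real d) ^ b)"
    by (intro mult_mono) auto
  then show ?thesis by simp
qed

lemma card_separating_pools_ge:
  assumes "finite I" "finite V" "v \<in> V" "card V \<ge> 2" "estar \<subseteq> I" "e \<subseteq> I"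
    and "card estar \<le> card V" "p \<le> card (e - estar)" "p \<le> card V"
  shows "real p / (18 * real (card V)) * card (I \<rightarrow>\<^sub>E V)
    \<le> card {h \<in> I \<rightarrow>\<^sub>E V. separates {x\<in>I. h x = v} estar e}"
proof -
  define r where "r = 1 - 1 / real (card V)"
  have "{h \<in> I \<rightarrow>\<^sub>E V. separates {x\<in>I. h x = v} estar e}
      = {h \<in> I \<rightarrow>\<^sub>E V. (\<forall>x\<in>estar. h x \<noteq> v) \<and> (\<exists>x\<in>e - estar. h x = v)}"
    using assms(5,6) by (auto simp: separates_def)
  then have eq: "real (card {h \<in> I \<rightarrow>\<^sub>E V. separates {x\<in>I. h x = v} estar e})
      = r ^ card estar * (1 - r ^ card (e - estar)) * real (card V) ^ card I"
    using card_PiE_avoiding_hitting[of I V v estar "e - estar"] assms(1-3,5,6)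
    by (simp add: r_def mult_ac subset_trans[OF Diff_subset])
  have "real p / (18 * real (card V)) * card (I \<rightarrow>\<^sub>E V)
      = real p / (18 * real (card V)) * real (card V) ^ card I"
    using assms(1) by (simp add: card_PiE)
  also have "\<dots> \<le> r ^ card estar * (1 - r ^ card (e - estar)) * real (card V) ^ card I"
    unfolding r_def using assms(4,7,8,9) by (intro mult_right_mono separation_probability_ge) auto
  finally show ?thesis
    using eq by simp
qed

lemma averaging_exists_heavy_element:
  fixes sep :: "'a \<Rightarrow> 'b \<Rightarrow> bool" and \<alpha> :: real
  assumes "finite \<Omega>" "\<Omega> \<noteq> {}" "finite P"
    and "\<And>\<pi>. \<pi> \<in> P \<Longrightarrow> \<alpha> * card \<Omega> \<le> card {h\<in>\<Omega>. sep h \<pi>}"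
  obtains h where "h \<in> \<Omega>" "\<alpha> * card P \<le> card {\<pi>\<in>P. sep h \<pi>}"
proof -
  have swap: "(\<Sum>\<pi>\<in>P. real (card {h\<in>\<Omega>. sep h \<pi>}))
      = (\<Sum>h\<in>\<Omega>. real (card {\<pi>\<in>P. sep h \<pi>}))"
    using sum.swap_restrict[OF assms(3,1), of "\<lambda>_ _. 1::real" "\<lambda>\<pi> h. sep h \<pi>"] by simp
  have "\<exists>h\<in>\<Omega>. \<alpha> * card P \<le> card {\<pi>\<in>P. sep h \<pi>}"
  proof (rule ccontr)
    assume "\<not> ?thesis"
    then have "(\<Sum>h\<in>\<Omega>. real (card {\<pi>\<in>P. sep h \<pi>})) < (\<Sum>h\<in>\<Omega>. \<alpha> * card P)"
      using assms(1,2) by (intro sum_strict_mono) auto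
    also have "\<dots> = (\<Sum>\<pi>\<in>P. \<alpha> * card \<Omega>)"
      by simp
    also have "\<dots> \<le> (\<Sum>\<pi>\<in>P. real (card {h\<in>\<Omega>. sep h \<pi>}))"
      using assms(4) by (intro sum_mono)
    also have "\<dots> = (\<Sum>h\<in>\<Omega>. real (card {\<pi>\<in>P. sep h \<pi>}))"
      by (fact swap)
    finally show False
      by simp
  qed
  then show thesis
    using that by blast
qed

lemma greedy_separating_list:
  fixes sep :: "'a \<Rightarrow> 'b \<Rightarrow> bool" and \<alpha> :: real
  assumes "finite \<Omega>" "\<Omega> \<noteq> {}" "finite P" "\<alpha> \<le> 1"
    and "\<And>\<pi>. \<pi> \<in> P \<Longrightarrow> \<alpha> * card \<Omega> \<le> card {h\<in>\<Omega>. sep h \<pi>}"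
  shows "\<exists>hs. length hs = k \<and> set hs \<subseteq> \<Omega> \<and>
    card {\<pi>\<in>P. \<forall>h\<in>set hs. \<not> sep h \<pi>} \<le> (1 - \<alpha>) ^ k * card P"
proof (induction k)
  case 0
  show ?case
    by simp
next
  case (Suc k)
  then obtain hs where hs: "length hs = k" "set hs \<subseteq> \<Omega>"
    "card {\<pi>\<in>P. \<forall>h\<in>set hs. \<not> sep h \<pi>} \<le> (1 - \<alpha>) ^ k * card P"
    by blast
  define R where "R = {\<pi>\<in>P. \<forall>h\<in>set hs. \<not> sep h \<pi>}"
  have "finite R"
    using assms(3) by (simp add: R_def)
  moreover have "\<And>\<pi>. \<pi> \<in> R \<Longrightarrow> \<alpha> * card \<Omega> \<le> card {h\<in>\<Omega>. sep h \<pi>}"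
    using assms(5) by (simp add: R_def)
  ultimately obtain h where h: "h \<in> \<Omega>" "\<alpha> * card R \<le> card {\<pi>\<in>R. sep h \<pi>}"
    using averaging_exists_heavy_element[OF assms(1,2)] by blast
  have "R \<inter> {\<pi>. sep h \<pi>} = {\<pi>\<in>R. sep h \<pi>}"
    "R - {\<pi>. sep h \<pi>} = {\<pi>\<in>R. \<not> sep h \<pi>}"
    by auto
  then have "card R = card {\<pi>\<in>R. sep h \<pi>} + card {\<pi>\<in>R. \<not> sep h \<pi>}"
    using card_Int_Diff[OF \<open>finite R\<close>, of "{\<pi>. sep h \<pi>}"] by simp
  then have "card {\<pi>\<in>R. \<not> sep h \<pi>} \<le> (1 - \<alpha>) * card R"
    using h(2) by (simp add: algebra_simps)
  also have "\<dots> \<le> (1 - \<alpha>) ^ Suc k * card P"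
    using mult_left_mono[OF hs(3), of "1 - \<alpha>"] assms(4) by (simp add: R_def mult.assoc)
  moreover have "{\<pi>\<in>P. \<forall>g\<in>set (h # hs). \<not> sep g \<pi>} = {\<pi>\<in>R. \<not> sep h \<pi>}"
    by (auto simp: R_def)
  ultimately show ?case
    using hs h by (intro exI[of _ "h # hs"]) auto
qed

lemma exists_separating_list:
  fixes sep :: "'a \<Rightarrow> 'b \<Rightarrow> bool" and \<alpha> :: real
  assumes "finite \<Omega>" "\<Omega> \<noteq> {}" "finite P" "\<alpha> \<le> 1"
    and "\<And>\<pi>. \<pi> \<in> P \<Longrightarrow> \<alpha> * card \<Omega> \<le> card {h\<in>\<Omega>. sep h \<pi>}"
    and "card P < exp (\<alpha> * k)"
  obtains hs where "length hs = k" "set hs \<subseteq> \<Omega>" "\<forall>\<pi>\<in>P. \<exists>h\<in>set hs. sep h \<pi>"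
proof -
  have "\<exists>hs. length hs = k \<and> set hs \<subseteq> \<Omega> \<and>
    card {\<pi>\<in>P. \<forall>h\<in>set hs. \<not> sep h \<pi>} \<le> (1 - \<alpha>) ^ k * card P"
    by (rule greedy_separating_list[OF assms(1-4)]) (rule assms(5))
  then obtain hs where hs: "length hs = k" "set hs \<subseteq> \<Omega>"
    "card {\<pi>\<in>P. \<forall>h\<in>set hs. \<not> sep h \<pi>} \<le> (1 - \<alpha>) ^ k * card P"
    by blast
  have "(1 - \<alpha>) ^ k \<le> exp (- \<alpha>) ^ k"
    using assms(4) exp_ge_add_one_self[of "- \<alpha>"] by (intro power_mono) auto
  also have "\<dots> = exp (- (\<alpha> * k))"
    by (simp add: exp_of_nat_mult[symmetric] mult.commute)
  finally have "(1 - \<alpha>) ^ k * card P \<le> exp (- (\<alpha> * k)) * card P"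
    by (intro mult_right_mono) auto
  also have "\<dots> < 1"
    using assms(6) by (simp add: exp_minus field_simps)
  finally have "card {\<pi>\<in>P. \<forall>h\<in>set hs. \<not> sep h \<pi>} = 0"
    using hs(3) by linarith
  then have "\<forall>\<pi>\<in>P. \<exists>h\<in>set hs. sep h \<pi>"
    using assms(3) by auto
  then show thesis
    using that hs(1,2) by blast
qed

lemma nat_ceiling_ln_le_log2:
  fixes a c :: real and N :: nat
  assumes "a \<ge> 0" "c \<ge> 1" "N \<ge> 1"
  shows "real (nat \<lceil>a * c * ln N\<rceil>) \<le> (a + 1) * c * log 2 N"
proof (cases "N = 1")
  case True
  then show ?thesis by simp
next
  case False
  have "ln N * ln 2 \<le> ln N"
    using assms(3) ln_2_less_1 by (intro mult_left_le) auto
  then have "ln N \<le> log 2 N"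
    by (simp add: log_def le_divide_eq)
  moreover have "1 \<le> log 2 N"
    using False assms(3) by simp
  ultimately have "a * c * ln N \<le> a * c * log 2 N" "1 \<le> c * log 2 N"
    using assms mult_mono[of 1 c 1 "log 2 N"] by (auto intro: mult_left_mono)
  then have "a * c * ln N + 1 \<le> (a + 1) * c * log 2 N"
    by (simp add: algebra_simps)
  moreover have "real (nat \<lceil>a * c * ln N\<rceil>) \<le> a * c * ln N + 1"
    using assms by (simp add: of_nat_nat)
  ultimately show ?thesis
    by linarith
qed

lemma exists_separating_pools:
  fixes I :: "'a set" and P :: "('a set \<times> 'a set) set" and d p k :: nat
  assumes "finite I" "finite P" "2 \<le> d" "p \<le> d"
    and "\<And>estar e. (estar, e) \<in> P \<Longrightarrow>
      estar \<subseteq> I \<and> e \<subseteq> I \<and> card estar \<le> d \<and> p \<le> card (e - estar)"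
    and "card P < exp (real p / (18 * real d) * k)"
  obtains Ts where "length Ts = k" "set Ts \<subseteq> Pow I"
    "\<forall>(estar, e)\<in>P. \<exists>T\<in>set Ts. separates T estar e"
proof -
  define \<Omega> where "\<Omega> = I \<rightarrow>\<^sub>E {1..d}"
  define pool where "pool h = {x\<in>I. h x = 1}" for h :: "'a \<Rightarrow> nat"
  have "real p / (18 * real d) * card \<Omega> \<le> card {h\<in>\<Omega>. case_prod (separates (pool h)) \<pi>}"
    if "\<pi> \<in> P" for \<pi>
    using card_separating_pools_ge[of I "{1..d}" 1 "fst \<pi>" "snd \<pi>" p] assms(1,3,4)
      assms(5)[of "fst \<pi>" "snd \<pi>"] that
    by (simp add: \<Omega>_def pool_def split_beta)
  moreover have "finite \<Omega>" "\<Omega> \<noteq> {}" "real p / (18 * real d) \<le> 1"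
    using assms(1,3,4) by (auto simp: \<Omega>_def PiE_eq_empty_iff finite_PiE)
  ultimately obtain hs where hs: "length hs = k" "set hs \<subseteq> \<Omega>"
    "\<forall>\<pi>\<in>P. \<exists>h\<in>set hs. case_prod (separates (pool h)) \<pi>"
    using exists_separating_list[of \<Omega> P _ "\<lambda>h. case_prod (separates (pool h))" k] assms(2,6)
    by blast
  have "\<exists>T\<in>set (map pool hs). separates T estar e" if "(estar, e) \<in> P" for estar e
    using hs(3)[rule_format, OF that] by auto
  then show thesis
    using hs(1) by (intro that[of "map pool hs"]) (auto simp: pool_def)
qed

lemma separating_pools_exist:
  fixes n d p :: nat and E :: "nat set set"
  assumes "E \<noteq> {}" "\<forall>e\<in>E. e \<subseteq> {1..n} \<and> card e \<le> d" "0 < p" "p \<le> d - 1"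
  obtains Ts where "set Ts \<subseteq> Pow {1..n}"
    "length Ts = nat \<lceil>36 * (real d / real p) * ln (card E)\<rceil>"
    "\<forall>estar\<in>E. \<forall>e\<in>E. p \<le> card (e - estar) \<longrightarrow> response Ts e \<noteq> response Ts estar"
proof -
  define P where "P = {(estar, e) \<in> E \<times> E. p \<le> card (e - estar)}"
  define k where "k = nat \<lceil>36 * (real d / real p) * ln (card E)\<rceil>"
  have "2 \<le> d" "p \<le> d"
    using assms(3,4) by linarith+
  have "finite E"
    using assms(2) by (intro finite_subset[of E "Pow {1..n}"]) auto
  have "P \<subset> E \<times> E"
  proof -
    obtain e0 where "e0 \<in> E"
      using assms(1) by blast
    then have "(e0, e0) \<in> E \<times> E - P"
      using assms(3) by (simp add: P_def)
    moreover have "P \<subseteq> E \<times> E"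
      by (auto simp: P_def)
    ultimately show ?thesis
      by blast
  qed
  then have "finite P"
    using \<open>finite E\<close> by (meson finite_SigmaI finite_subset less_imp_le)
  have pairs: "\<And>estar e. (estar, e) \<in> P \<Longrightarrow>
      estar \<subseteq> {1..n} \<and> e \<subseteq> {1..n} \<and> card estar \<le> d \<and> p \<le> card (e - estar)"
    using assms(2) by (auto simp: P_def)
  have "card P < card E ^ 2"
    using \<open>P \<subset> E \<times> E\<close> \<open>finite E\<close> psubset_card_mono[of "E \<times> E" P]
    by (simp add: card_cartesian_product power2_eq_square)
  also have "real (card E ^ 2) = exp (2 * ln (card E))"
    using assms(1) \<open>finite E\<close> exp_of_nat_mult[of 2 "ln (card E)"] by (simp add: card_gt_0_iff)
  also have "2 * ln (card E) \<le> real p / (18 * real d) * k"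
  proof -
    have "36 * (real d / real p) * ln (card E) \<le> k"
      unfolding k_def by linarith
    then have "real p / (18 * real d) * (36 * (real d / real p) * ln (card E))
        \<le> real p / (18 * real d) * k"
      by (rule mult_left_mono) simp
    moreover have "real p / (18 * real d) * (36 * (real d / real p) * ln (card E))
        = 2 * ln (card E)"
      using assms(3) \<open>2 \<le> d\<close> by (simp add: field_simps)
    ultimately show ?thesis
      by simp
  qed
  finally have "card P < exp (real p / (18 * real d) * k)"
    by simp
  then obtain Ts where Ts: "length Ts = k" "set Ts \<subseteq> Pow {1..n}"
    "\<forall>(estar, e)\<in>P. \<exists>T\<in>set Ts. separates T estar e"
    using exists_separating_pools[OF _ \<open>finite P\<close> \<open>2 \<le> d\<close> \<open>p \<le> d\<close> pairs] by blast
  have "response Ts e \<noteq> response Ts estar"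
    if "estar \<in> E" "e \<in> E" "p \<le> card (e - estar)" for estar e
  proof -
    have "(estar, e) \<in> P"
      using that by (simp add: P_def)
    then obtain T where "T \<in> set Ts" "separates T estar e"
      using Ts(3) by blast
    then show ?thesis
      by (rule response_neq_if_separates)
  qed
  then show thesis
    using that Ts(1,2) by (simp add: k_def)
qed

theorem theorem2:
  shows "\<exists>C::real. C > 0 \<and>
    (\<forall>(n::nat) (d::nat) (p::nat) (E::nat set set).
       n > 0 \<and> d > 0 \<and> E \<noteq> {} \<and> (\<forall>e\<in>E. e \<subseteq> {1..n} \<and> card e \<le> d)
       \<and> 0 < p \<and> p \<le> d - 1 \<longrightarrow>
       (\<exists>Ts::nat set list.
          set Ts \<subseteq> Pow {1..n} \<and>
          real (length Ts) \<le> C * (real d / real p) * log 2 (real (card E)) \<and>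
          (\<forall>estar\<in>E. \<forall>e\<in>E. card (e - estar) \<ge> p \<longrightarrow> response Ts e \<noteq> response Ts estar)))"
proof (intro exI[of _ 37] conjI allI impI)
  fix n d p :: nat and E :: "nat set set"
  assume asm: "n > 0 \<and> d > 0 \<and> E \<noteq> {} \<and> (\<forall>e\<in>E. e \<subseteq> {1..n} \<and> card e \<le> d) \<and> 0 < p \<and> p \<le> d - 1"
  then obtain Ts where Ts: "set Ts \<subseteq> Pow {1..n}"
      "length Ts = nat \<lceil>36 * (real d / real p) * ln (card E)\<rceil>"
      "\<forall>estar\<in>E. \<forall>e\<in>E. p \<le> card (e - estar) \<longrightarrow> response Ts e \<noteq> response Ts estar"
    using separating_pools_exist[of E n d p] by metis
  have "finite E"
    using asm by (intro finite_subset[of E "Pow {1..n}"]) auto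
  then have "real (length Ts) \<le> (36 + 1) * (real d / real p) * log 2 (card E)"
    unfolding Ts(2) using asm by (intro nat_ceiling_ln_le_log2) (auto simp: Suc_le_eq card_gt_0_iff)
  then show "\<exists>Ts. set Ts \<subseteq> Pow {1..n} \<and>
      real (length Ts) \<le> 37 * (real d / real p) * log 2 (real (card E)) \<and>
      (\<forall>estar\<in>E. \<forall>e\<in>E. card (e - estar) \<ge> p \<longrightarrow> response Ts e \<noteq> response Ts estar)"
    using Ts(1,3) by auto
qed simp

end
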